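(* Let $G$ be a finite simple graph that contains no induced subgraph isomorphic to a banner or to $C_5$, and let $A$ be an odd antihole of $G$ (an induced subgraph). Suppose some two vertices of $A$ belong to a co-triangle of $G$. Then there is a homogeneous set $H$ of $G$ such that $H$ contains all vertices of $A$ and no co-triangle of $G[H]$ contains two vertices of $A$.
   Context: A hole is a chordless (induced) cycle with at least four vertices; it is odd if it has an odd number of vertices. An antihole is the complement of a hole; an odd antihole is the complement of an odd hole. $C_5$ is the chordless cycle on five vertices. A banner is the graph consisting of a hole on four vertices together with one additional vertex adjacent to exactly one vertex of that hole. A co-triangle is a set of three pairwise non-adjacent vertices. For $X \subseteq V(G)$, $G[X]$ is the subgraph induced by $X$. A set $H \subseteq V(G)$ is homogeneous if $2 \leq |H| < |V(G)|$ and every vertex of $V(G)\setminus H$ is either adjacent to all vertices of $H$ or to no vertex of $H$. *)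

theory Defs
  imports Main
begin

text \<open>A finite simple graph: finite vertex set V and a symmetric, irreflexive
adjacency relation E (only its restriction to V matters).\<close>
definition simple_graph :: "'a set \<Rightarrow> ('a \<Rightarrow> 'a \<Rightarrow> bool) \<Rightarrow> bool" where
  "simple_graph V E \<longleftrightarrow> finite V \<and> (\<forall>x\<in>V. \<forall>y\<in>V. E x y \<longleftrightarrow> E y x) \<and> (\<forall>x\<in>V. \<not> E x x)"

definition induced_cycle :: "('a \<Rightarrow> 'a \<Rightarrow> bool) \<Rightarrow> 'a list \<Rightarrow> bool" where
  "induced_cycle E vs \<longleftrightarrow> distinct vs \<and>
     (\<forall>i<length vs. \<forall>j<length vs. i \<noteq> j \<longrightarrow>
        (E (vs!i) (vs!j) \<longleftrightarrow> (j = Suc i mod length vs \<or> i = Suc j mod length vs)))"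

definition hole :: "'a set \<Rightarrow> ('a \<Rightarrow> 'a \<Rightarrow> bool) \<Rightarrow> 'a set \<Rightarrow> bool" where
  "hole V E S \<longleftrightarrow> S \<subseteq> V \<and> (\<exists>vs. set vs = S \<and> length vs \<ge> 4 \<and> induced_cycle E vs)"

definition odd_hole :: "'a set \<Rightarrow> ('a \<Rightarrow> 'a \<Rightarrow> bool) \<Rightarrow> 'a set \<Rightarrow> bool" where
  "odd_hole V E S \<longleftrightarrow> hole V E S \<and> odd (card S)"

definition compl_adj :: "('a \<Rightarrow> 'a \<Rightarrow> bool) \<Rightarrow> 'a \<Rightarrow> 'a \<Rightarrow> bool" where
  "compl_adj E x y \<longleftrightarrow> x \<noteq> y \<and> \<not> E x y"

definition odd_antihole :: "'a set \<Rightarrow> ('a \<Rightarrow> 'a \<Rightarrow> bool) \<Rightarrow> 'a set \<Rightarrow> bool" where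
  "odd_antihole V E S \<longleftrightarrow> odd_hole V (compl_adj E) S"

definition has_induced_C5 :: "'a set \<Rightarrow> ('a \<Rightarrow> 'a \<Rightarrow> bool) \<Rightarrow> bool" where
  "has_induced_C5 V E \<longleftrightarrow> (\<exists>vs. set vs \<subseteq> V \<and> length vs = 5 \<and> induced_cycle E vs)"

definition has_induced_banner :: "'a set \<Rightarrow> ('a \<Rightarrow> 'a \<Rightarrow> bool) \<Rightarrow> bool" where
  "has_induced_banner V E \<longleftrightarrow> (\<exists>a b c d e. {a,b,c,d,e} \<subseteq> V \<and> e \<notin> {a,b,c,d} \<and>
     induced_cycle E [a,b,c,d] \<and> E e a \<and> \<not> E e b \<and> \<not> E e c \<and> \<not> E e d)"

definition co_triangle :: "'a set \<Rightarrow> ('a \<Rightarrow> 'a \<Rightarrow> bool) \<Rightarrow> 'a set \<Rightarrow> bool" where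
  "co_triangle V E T \<longleftrightarrow> T \<subseteq> V \<and> card T = 3 \<and> (\<forall>x\<in>T. \<forall>y\<in>T. \<not> E x y)"

definition homogeneous :: "'a set \<Rightarrow> ('a \<Rightarrow> 'a \<Rightarrow> bool) \<Rightarrow> 'a set \<Rightarrow> bool" where
  "homogeneous V E H \<longleftrightarrow> H \<subseteq> V \<and> 2 \<le> card H \<and> card H < card V \<and>
     (\<forall>v\<in>V - H. (\<forall>h\<in>H. E v h) \<or> (\<forall>h\<in>H. \<not> E v h))"

end

theory Submission
  imports Defs "HOL-Number_Theory.Cong"
begin

text \<open>Index the antihole cyclically as \<open>a\<^sub>0, \<dots>, a\<^sub>n\<^sub>-\<^sub>1\<close>, so that two of its
vertices are non-adjacent exactly when they are cyclically consecutive; \<open>n \<ge> 7\<close> since the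
antihole of length 5 is a \<open>C\<^sub>5\<close>. Banner-freeness shows that a vertex outside \<open>A\<close> missing two
consecutive \<open>a\<^sub>i\<close> also misses the next one, hence all of \<open>A\<close>. As \<open>A\<close> contains no co-triangle,
the third vertex of a co-triangle through two vertices of \<open>A\<close> therefore lies in the set \<open>Z\<close> of
vertices anticomplete to \<open>A\<close>. Let \<open>K\<close> be the vertices outside \<open>Z\<close> with a neighbour in \<open>Z\<close>, and
\<open>H = V - Z - K\<close>. Excluding banners and \<open>C\<^sub>5\<close> (and using that \<open>n\<close> is odd), every vertex of \<open>K\<close>
is complete to \<open>A\<close> and to every vertex outside \<open>A\<close> that has a neighbour in \<open>A\<close> but none in \<open>Z\<close>.
Hence \<open>H\<close> is homogeneous, and it contains \<open>A\<close> but no vertex of \<open>Z\<close>.\<close>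

lemma simple_graph_sym: "simple_graph V E \<Longrightarrow> x \<in> V \<Longrightarrow> y \<in> V \<Longrightarrow> E x y \<longleftrightarrow> E y x"
  unfolding simple_graph_def by blast

lemma simple_graph_irrefl: "simple_graph V E \<Longrightarrow> x \<in> V \<Longrightarrow> \<not> E x x"
  unfolding simple_graph_def by blast

lemma less_4_cases: "(i::nat) < 4 \<Longrightarrow> i = 0 \<or> i = 1 \<or> i = 2 \<or> i = 3" by auto
lemma less_5_cases: "(i::nat) < 5 \<Longrightarrow> i = 0 \<or> i = 1 \<or> i = 2 \<or> i = 3 \<or> i = 4" by auto

lemma has_induced_bannerI:
  assumes sg: "simple_graph V E" and "a \<in> V" "b \<in> V" "c \<in> V" "d \<in> V" "e \<in> V"
    and dist: "distinct [a,b,c,d,e]"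
    and "E a b" "E b c" "E c d" "E d a" "\<not> E a c" "\<not> E b d"
    and "E e a" "\<not> E e b" "\<not> E e c" "\<not> E e d"
  shows "has_induced_banner V E"
proof -
  have rev: "E b a" "E c b" "E d c" "E a d" "\<not> E c a" "\<not> E d b"
    using assms simple_graph_sym[OF sg] by metis+
  have "induced_cycle E [a,b,c,d]"
    unfolding induced_cycle_def
  proof (intro conjI allI impI)
    show "distinct [a,b,c,d]" using dist by auto
    fix i j assume "i < length [a,b,c,d]" "j < length [a,b,c,d]" "i \<noteq> j"
    then have "i < 4" "j < 4" "i \<noteq> j" by auto
    then show "E ([a,b,c,d]!i) ([a,b,c,d]!j) \<longleftrightarrow>
        j = Suc i mod length [a,b,c,d] \<or> i = Suc j mod length [a,b,c,d]"
      using less_4_cases[OF \<open>i < 4\<close>] less_4_cases[OF \<open>j < 4\<close>] rev assms \<open>i \<noteq> j\<close>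
      by (elim disjE) simp_all
  qed
  then show ?thesis
    unfolding has_induced_banner_def using assms
    by (intro exI[of _ a] exI[of _ b] exI[of _ c] exI[of _ d] exI[of _ e]) auto
qed

lemma has_induced_C5I:
  assumes sg: "simple_graph V E" and V: "a \<in> V" "b \<in> V" "c \<in> V" "d \<in> V" "e \<in> V"
    and dist: "distinct [a,b,c,d,e]"
    and "E a b" "E b c" "E c d" "E d e" "E e a"
    and "\<not> E a c" "\<not> E a d" "\<not> E b d" "\<not> E b e" "\<not> E c e"
  shows "has_induced_C5 V E"
proof -
  have rev: "E b a" "E c b" "E d c" "E e d" "E a e" "\<not> E c a" "\<not> E d a" "\<not> E d b" "\<not> E e b" "\<not> E e c"
    using assms simple_graph_sym[OF sg] by metis+
  have "induced_cycle E [a,b,c,d,e]"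
    unfolding induced_cycle_def
  proof (intro conjI allI impI)
    show "distinct [a,b,c,d,e]" using dist .
    fix i j assume "i < length [a,b,c,d,e]" "j < length [a,b,c,d,e]" "i \<noteq> j"
    then have "i < 5" "j < 5" "i \<noteq> j" by auto
    then show "E ([a,b,c,d,e]!i) ([a,b,c,d,e]!j) \<longleftrightarrow>
        j = Suc i mod length [a,b,c,d,e] \<or> i = Suc j mod length [a,b,c,d,e]"
      using less_5_cases[OF \<open>i < 5\<close>] less_5_cases[OF \<open>j < 5\<close>] rev assms \<open>i \<noteq> j\<close>
      by (elim disjE) simp_all
  qed
  then show ?thesis
    unfolding has_induced_C5_def using V by (intro exI[of _ "[a,b,c,d,e]"]) auto
qed

lemma mod_add_left_cancel: "((t::nat) + x) mod n = (t + y) mod n \<longleftrightarrow> x mod n = y mod n"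
  using cong_add_lcancel_nat[of t x y n] unfolding cong_def .

locale antihole_cycle =
  fixes V :: "'a set" and E :: "'a \<Rightarrow> 'a \<Rightarrow> bool" and vs :: "'a list"
  assumes simple: "simple_graph V E"
    and cycle: "induced_cycle (compl_adj E) vs"
    and vs_V: "set vs \<subseteq> V"
    and vs_nonempty: "vs \<noteq> []"
begin

definition cyc :: "nat \<Rightarrow> 'a" where "cyc i = vs ! (i mod length vs)"

lemma length_pos: "length vs > 0"
  using vs_nonempty by simp

lemma cyc_in_set: "cyc i \<in> set vs"
  unfolding cyc_def using length_pos by simp

lemma cyc_in_V: "cyc i \<in> V"
  using cyc_in_set vs_V by blast

lemma distinct_vs: "distinct vs"
  using cycle unfolding induced_cycle_def by blast

lemma adj_sym: "x \<in> V \<Longrightarrow> y \<in> V \<Longrightarrow> E x y \<longleftrightarrow> E y x"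
  using simple_graph_sym[OF simple] .

lemma adj_nth:
  assumes "i < length vs" "j < length vs"
  shows "E (vs!i) (vs!j) \<longleftrightarrow> \<not> (i = j \<or> j = Suc i mod length vs \<or> i = Suc j mod length vs)"
proof (cases "i = j")
  case True
  have "vs!j \<in> V" using vs_V assms nth_mem by blast
  then show ?thesis using simple_graph_irrefl[OF simple] True by auto
next
  case False
  then have "vs!i \<noteq> vs!j" using distinct_vs assms by (simp add: nth_eq_iff_index_eq)
  moreover have "compl_adj E (vs!i) (vs!j) \<longleftrightarrow> j = Suc i mod length vs \<or> i = Suc j mod length vs"
    using cycle assms False unfolding induced_cycle_def by blast
  ultimately show ?thesis using False unfolding compl_adj_def by auto
qed

lemma cyc_eq_iff: "cyc i = cyc j \<longleftrightarrow> i mod length vs = j mod length vs"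
  unfolding cyc_def using distinct_vs length_pos by (simp add: nth_eq_iff_index_eq)

lemma adj_cyc: "E (cyc i) (cyc j) \<longleftrightarrow> \<not> (i mod length vs = j mod length vs \<or>
    j mod length vs = Suc i mod length vs \<or> i mod length vs = Suc j mod length vs)"
  unfolding cyc_def using adj_nth[of "i mod length vs" "j mod length vs"] length_pos
  by (simp add: mod_Suc_eq)

lemma adj_cyc_offset:
  assumes "c < length vs" "d < length vs"
  shows "E (cyc (t+c)) (cyc (t+d)) \<longleftrightarrow>
    \<not> (c = d \<or> (c+1) mod length vs = d \<or> (d+1) mod length vs = c)"
proof -
  have "(t+c) mod length vs = (t+d) mod length vs \<longleftrightarrow> c = d"
    using mod_add_left_cancel assms by simp
  moreover have "(t+d) mod length vs = Suc (t+c) mod length vs \<longleftrightarrow> (c+1) mod length vs = d"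
    using mod_add_left_cancel[of t d "length vs" "c+1"] assms by (auto simp: mod_Suc_eq)
  moreover have "(t+c) mod length vs = Suc (t+d) mod length vs \<longleftrightarrow> (d+1) mod length vs = c"
    using mod_add_left_cancel[of t c "length vs" "d+1"] assms by (auto simp: mod_Suc_eq)
  ultimately show ?thesis using adj_cyc[of "t+c" "t+d"] by (simp add: mod_Suc_eq)
qed

lemma cyc_offset_eq_iff:
  "c < length vs \<Longrightarrow> d < length vs \<Longrightarrow> cyc (t+c) = cyc (t+d) \<longleftrightarrow> c = d"
  using cyc_eq_iff mod_add_left_cancel by simp

lemma ex_cyc_offset:
  assumes "x \<in> set vs"
  obtains c where "c < length vs" "x = cyc (t + c)"
proof -
  obtain j where j: "j < length vs" "x = vs!j"
    using assms by (metis in_set_conv_nth)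
  define c where "c = (j + (length vs - 1) * t) mod length vs"
  have "t + (j + (length vs - 1) * t) = j + t * length vs"
    using length_pos by (cases "length vs") (simp_all add: algebra_simps)
  then have "(t + c) mod length vs = j"
    unfolding c_def using j(1) by (metis mod_add_right_eq mod_less mod_mult_self1)
  then have "x = cyc (t + c)"
    unfolding cyc_def using j by simp
  moreover have "c < length vs"
    unfolding c_def using length_pos by simp
  ultimately show thesis using that by blast
qed

lemma nonadj_consecutive:
  assumes "x \<in> set vs" "y \<in> set vs" "x \<noteq> y" "\<not> E x y"
  obtains t where "x = cyc t \<and> y = cyc (t+1) \<or> y = cyc t \<and> x = cyc (t+1)"
proof -
  obtain i j where ij: "i < length vs" "j < length vs" "x = vs!i" "y = vs!j"
    using assms by (metis in_set_conv_nth)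
  then have "j = Suc i mod length vs \<or> i = Suc j mod length vs"
    using adj_nth assms by auto
  moreover have "cyc i = x" "cyc j = y"
    unfolding cyc_def using ij by auto
  ultimately show thesis
    using that unfolding cyc_def by (metis Suc_eq_plus1 mod_Suc_eq mod_mod_trivial)
qed

lemma has_induced_C5_if_length_5:
  assumes "length vs = 5"
  shows "has_induced_C5 V E"
proof -
  have "E (vs!i) (vs!j) \<longleftrightarrow> \<not> (i = j \<or> j = Suc i mod 5 \<or> i = Suc j mod 5)"
    if "i < 5" "j < 5" for i j
    using adj_nth that assms by simp
  moreover have "vs!i = vs!j \<longleftrightarrow> i = j" if "i < 5" "j < 5" for i j
    using distinct_vs that assms nth_eq_iff_index_eq by metis
  moreover have "vs!i \<in> V" if "i < 5" for i
    using vs_V that assms nth_mem by (metis subsetD)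
  ultimately show ?thesis
    using has_induced_C5I[OF simple, of "vs!0" "vs!2" "vs!4" "vs!1" "vs!3"] by simp
qed

lemma no_co_triangle_in_cycle:
  assumes "4 \<le> length vs" and "x \<in> set vs" "y \<in> set vs" "w \<in> set vs"
    and "x \<noteq> y" "w \<noteq> x" "w \<noteq> y" "\<not> E x y" "\<not> E w x" "\<not> E w y"
  shows False
proof -
  obtain t where "x = cyc t \<and> y = cyc (t+1) \<or> y = cyc t \<and> x = cyc (t+1)"
    using nonadj_consecutive assms by blast
  then have w01: "\<not> E (cyc (t+0)) w" "\<not> E (cyc (t+1)) w" "w \<noteq> cyc (t+0)" "w \<noteq> cyc (t+1)"
    using assms adj_sym vs_V cyc_in_V by auto
  obtain c where c: "c < length vs" "w = cyc (t+c)"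
    using ex_cyc_offset[OF assms(4)] by blast
  with w01 have "c \<noteq> 0" "c \<noteq> 1" by (metis add.right_neutral)+
  have "(c+1) mod length vs = 0"
    using adj_cyc_offset[of 0 c t] c w01 \<open>c \<noteq> 0\<close> \<open>c \<noteq> 1\<close> assms(1) length_pos by auto
  moreover have "c = 2 \<or> (c+1) mod length vs = 1"
    using adj_cyc_offset[of 1 c t] c w01 \<open>c \<noteq> 0\<close> \<open>c \<noteq> 1\<close> assms(1) length_pos by auto
  moreover have "c + 1 = length vs"
  proof (rule ccontr)
    assume "c + 1 \<noteq> length vs"
    with c(1) have "(c+1) mod length vs = c + 1" by simp
    with \<open>(c+1) mod length vs = 0\<close> show False by simp
  qed
  ultimately show False using assms(1) by auto
qed

end

locale banner_free_antihole = antihole_cycle +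
  assumes length_ge_7: "7 \<le> length vs"
    and odd_length: "odd (length vs)"
    and banner_free: "\<not> has_induced_banner V E"
    and C5_free: "\<not> has_induced_C5 V E"
begin

lemma window_adj:
  "c \<le> 5 \<Longrightarrow> d \<le> 5 \<Longrightarrow> E (cyc (t+c)) (cyc (t+d)) \<longleftrightarrow> \<not> (c = d \<or> c+1 = d \<or> d+1 = c)"
  using adj_cyc_offset[of c d t] length_ge_7 by simp

lemma window_eq: "c \<le> 5 \<Longrightarrow> d \<le> 5 \<Longrightarrow> cyc (t+c) = cyc (t+d) \<longleftrightarrow> c = d"
  using cyc_offset_eq_iff[of c d t] length_ge_7 by simp

lemma nonadj_step:
  assumes y: "y \<in> V" "y \<notin> set vs" and "\<not> E y (cyc t)" "\<not> E y (cyc (t+1))"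
  shows "\<not> E y (cyc (t+2))"
proof
  assume "E y (cyc (t+2))"
  define p where "p c = cyc (t+c)" for c
  note W = window_adj[where t=t, folded p_def] window_eq[where t=t, folded p_def]
  have pV: "p c \<in> V" and yp: "y \<noteq> p c" "p c \<noteq> y" and S: "E (p c) y \<longleftrightarrow> E y (p c)" for c
    unfolding p_def using cyc_in_V cyc_in_set y adj_sym by metis+
  have h: "\<not> E y (p 0)" "\<not> E y (p 1)" "E y (p 2)"
    using assms \<open>E y (cyc (t+2))\<close> unfolding p_def by simp_all
  show False
  proof (cases "E y (p 3)")
    case True
    then show False
      using banner_free has_induced_bannerI[OF simple, of "p 3" y "p 2" "p 0" "p 1"]
        W pV y yp S h by simp
  next
    case False
    have h4: "\<not> E y (p 4)"
    proof
      assume "E y (p 4)"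
      then show False
        using banner_free has_induced_bannerI[OF simple, of "p 4" "p 1" "p 3" "p 0" y]
          W pV y yp S h False by simp
    qed
    have h5: "\<not> E y (p 5)"
    proof
      assume "E y (p 5)"
      then show False
        using banner_free has_induced_bannerI[OF simple, of "p 5" "p 1" "p 4" "p 0" y]
          W pV y yp S h h4 by simp
    qed
    show False
      using banner_free has_induced_bannerI[OF simple, of "p 2" "p 4" "p 1" "p 5" y]
        W pV y yp S h h4 h5 by simp
  qed
qed

lemma anticomplete_if_nonadj_consecutive:
  assumes y: "y \<in> V" "y \<notin> set vs" and "\<not> E y (cyc t)" "\<not> E y (cyc (t+1))"
    and x: "x \<in> set vs"
  shows "\<not> E y x"
proof -
  have "\<not> E y (cyc (t+m)) \<and> \<not> E y (cyc (t+m+1))" for m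
  proof (induction m)
    case 0
    then show ?case using assms by simp
  next
    case (Suc m)
    then have "\<not> E y (cyc (t+m+2))"
      using nonadj_step[OF y, of "t+m"] by (simp add: add.assoc)
    with Suc show ?case by (simp add: add.assoc)
  qed
  moreover obtain c where "x = cyc (t+c)"
    using ex_cyc_offset[OF x] by blast
  ultimately show ?thesis by blast
qed

text \<open>Steps of two reach every position because the cycle has odd length.\<close>

lemma cyc_shift_two_induct:
  assumes "Q (cyc t)" and step: "\<And>s. Q (cyc s) \<Longrightarrow> Q (cyc (s+2))"
  shows "Q (cyc (t+1))"
proof -
  have "Q (cyc (t + 2*m))" for m
  proof (induction m)
    case 0
    then show ?case using assms by simp
  next
    case (Suc m)
    then show ?case using step[of "t+2*m"] by (simp add: add.assoc)
  qed
  moreover have "2 * ((length vs + 1) div 2) = length vs + 1"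
    using odd_length by presburger
  moreover have "cyc (t + (length vs + 1)) = cyc (t+1)"
    unfolding cyc_eq_iff by (metis add.assoc add.commute mod_add_self2)
  ultimately show ?thesis by metis
qed

lemma complete_if_adj_anticomplete:
  assumes k: "k \<in> V" "k \<notin> set vs" and z: "z \<in> V" "z \<notin> set vs"
    and "E k z" and z_anti: "\<forall>x\<in>set vs. \<not> E z x" and k_nbr: "\<exists>x\<in>set vs. E k x"
  shows "\<forall>x\<in>set vs. E k x"
proof (rule ccontr)
  assume "\<not> (\<forall>x\<in>set vs. E k x)"
  then obtain t where t: "\<not> E k (cyc t)"
    by (metis add_0 ex_cyc_offset)
  have "z \<noteq> k"
    using \<open>E k z\<close> simple_graph_irrefl[OF simple] k by blast
  have no_pair: False if "\<not> E k (cyc s)" "\<not> E k (cyc (s+1))" for s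
    using anticomplete_if_nonadj_consecutive[OF k that] k_nbr by blast
  have "\<not> E k (cyc (s+2))" if "\<not> E k (cyc s)" for s
  proof
    assume "E k (cyc (s+2))"
    define p where "p c = cyc (s+c)" for c
    note W = window_adj[where t=s, folded p_def] window_eq[where t=s, folded p_def]
    have pV: "p c \<in> V" and kp: "k \<noteq> p c" "p c \<noteq> k" "z \<noteq> p c" "p c \<noteq> z"
      and S: "E (p c) k \<longleftrightarrow> E k (p c)" "E (p c) z \<longleftrightarrow> E z (p c)"
      and zp: "\<not> E z (p c)" for c
      unfolding p_def using cyc_in_V cyc_in_set k z adj_sym z_anti by metis+
    have "E z k"
      using \<open>E k z\<close> adj_sym k z by blast
    have h: "\<not> E k (p 0)" "E k (p 1)" "E k (p 2)"
      using that \<open>E k (cyc (s+2))\<close> no_pair[of s] unfolding p_def by auto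
    show False
    proof (cases "E k (p 3)")
      case True
      then show False
        using banner_free has_induced_bannerI[OF simple, of k "p 2" "p 0" "p 3" z]
          W pV k z kp S zp \<open>E z k\<close> \<open>z \<noteq> k\<close> h by simp
    next
      case False
      then show False
        using C5_free has_induced_C5I[OF simple, of k "p 1" "p 3" "p 0" "p 2"] W pV k kp S h by simp
    qed
  qed
  then have "\<not> E k (cyc (t+1))"
    using cyc_shift_two_induct[of "\<lambda>v. \<not> E k v", OF t] by blast
  then show False using no_pair t by blast
qed

lemma adj_if_adj_anticomplete:
  assumes k: "k \<in> V" "k \<notin> set vs" and z: "z \<in> V" "z \<notin> set vs"
    and "E k z" and z_anti: "\<forall>x\<in>set vs. \<not> E z x" and k_compl: "\<forall>x\<in>set vs. E k x"
    and h: "h \<in> V" "h \<notin> set vs" "h \<noteq> k" "h \<noteq> z"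
    and h_nbr: "\<exists>x\<in>set vs. E h x" and "\<not> E h z"
  shows "E k h"
proof (rule ccontr)
  assume "\<not> E k h"
  have no_pair: False if "\<not> E h (cyc s)" "\<not> E h (cyc (s+1))" for s
    using anticomplete_if_nonadj_consecutive[OF h(1,2) that] h_nbr by blast
  have "\<exists>q. E h (cyc q) \<and> E h (cyc (q+1))"
  proof (rule ccontr)
    assume no_adj_pair: "\<not> (\<exists>q. E h (cyc q) \<and> E h (cyc (q+1)))"
    obtain t where t: "E h (cyc t)"
      using h_nbr by (metis add_0 ex_cyc_offset)
    have "E h (cyc (s+2))" if "E h (cyc s)" for s
      using that no_adj_pair no_pair[of "s+1"] by (metis add.assoc one_add_one)
    then have "E h (cyc (t+1))"
      using cyc_shift_two_induct[of "\<lambda>v. E h v", OF t] by blast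
    with t no_adj_pair show False by blast
  qed
  then obtain q where q: "E h (cyc q)" "E h (cyc (q+1))" by blast
  define p where "p c = cyc (q+c)" for c
  note W = window_adj[where t=q, folded p_def] window_eq[where t=q, folded p_def]
  have pV: "p c \<in> V" and kp: "k \<noteq> p c" "p c \<noteq> k" "z \<noteq> p c" "p c \<noteq> z" "h \<noteq> p c" "p c \<noteq> h"
    and S: "E (p c) k \<longleftrightarrow> E k (p c)" "E (p c) h \<longleftrightarrow> E h (p c)" "E (p c) z \<longleftrightarrow> E z (p c)"
    and zp: "\<not> E z (p c)" and kp2: "E k (p c)" for c
    unfolding p_def using cyc_in_V cyc_in_set k z h adj_sym z_anti k_compl by metis+
  have "z \<noteq> k"
    using \<open>E k z\<close> simple_graph_irrefl[OF simple] k by blast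
  moreover have "E z k" "\<not> E z h"
    using \<open>E k z\<close> \<open>\<not> E h z\<close> adj_sym k z h by blast+
  moreover have "E h (p 0)" "E h (p 1)"
    using q unfolding p_def by auto
  ultimately show False
    using banner_free has_induced_bannerI[OF simple, of k "p 0" h "p 1" z]
      W pV k z h kp S zp kp2 \<open>\<not> E k h\<close> by simp
qed

definition Z :: "'a set" where
  "Z = {x \<in> V. x \<notin> set vs \<and> (\<forall>y\<in>set vs. \<not> E x y)}"

definition K :: "'a set" where
  "K = {x \<in> V. x \<notin> Z \<and> (\<exists>z\<in>Z. E x z)}"

definition H :: "'a set" where
  "H = V - Z - K"

lemma co_triangle_meets_Z:
  assumes T: "co_triangle V E T" and two: "2 \<le> card (T \<inter> set vs)"
  shows "T \<inter> Z \<noteq> {}"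
proof -
  have TV: "T \<subseteq> V" and "card T = 3" and indep: "\<forall>x\<in>T. \<forall>y\<in>T. \<not> E x y"
    using T unfolding co_triangle_def by auto
  then have "finite T" by (simp add: card_ge_0_finite)
  obtain x y where xy: "x \<in> T \<inter> set vs" "y \<in> T \<inter> set vs" "x \<noteq> y"
    using two card_le_Suc0_iff_eq[of "T \<inter> set vs"] \<open>finite T\<close> by force
  have "\<not> T \<subseteq> {x, y}"
  proof
    assume "T \<subseteq> {x, y}"
    then have "card T \<le> card {x, y}" by (simp add: card_mono)
    also have "\<dots> \<le> 2" by (simp add: card_insert_if)
    finally show False using \<open>card T = 3\<close> by simp
  qed
  then obtain w where w: "w \<in> T" "w \<noteq> x" "w \<noteq> y" by blast
  have "w \<notin> set vs"
    using no_co_triangle_in_cycle[of x y w] length_ge_7 xy w indep by auto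
  moreover obtain t where "x = cyc t \<and> y = cyc (t+1) \<or> y = cyc t \<and> x = cyc (t+1)"
    using nonadj_consecutive[of x y] xy indep by auto
  then have "\<not> E w (cyc t)" "\<not> E w (cyc (t+1))"
    using indep xy w by auto
  ultimately have "w \<in> Z"
    unfolding Z_def using anticomplete_if_nonadj_consecutive[of w t] w TV by auto
  with w show ?thesis by blast
qed

lemma set_subset_H: "set vs \<subseteq> H"
  unfolding H_def K_def Z_def using vs_V adj_sym by blast

lemma Z_anticomplete_H: "v \<in> Z \<Longrightarrow> h \<in> H \<Longrightarrow> \<not> E v h"
  unfolding H_def K_def Z_def using adj_sym by blast

lemma K_complete_H:
  assumes "v \<in> K" "h \<in> H"
  shows "E v h"
proof -
  obtain z where z: "z \<in> Z" "E v z" and v: "v \<in> V" "v \<notin> Z"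
    using assms(1) unfolding K_def by blast
  have z_props: "z \<in> V" "z \<notin> set vs" "\<forall>y\<in>set vs. \<not> E z y"
    using z unfolding Z_def by auto
  then have "v \<notin> set vs"
    using z adj_sym v by blast
  moreover have "\<exists>y\<in>set vs. E v y"
    using v \<open>v \<notin> set vs\<close> unfolding Z_def by blast
  ultimately have v_compl: "\<forall>x\<in>set vs. E v x"
    using complete_if_adj_anticomplete[of v z] v z z_props by blast
  show ?thesis
  proof (cases "h \<in> set vs")
    case False
    have h: "h \<in> V" "h \<notin> Z" "h \<notin> K"
      using assms(2) unfolding H_def by auto
    then have "\<exists>y\<in>set vs. E h y" and "\<not> E h z" and "h \<noteq> v" "h \<noteq> z"
      using False z assms(1) unfolding Z_def K_def by auto
    then show ?thesis
      using adj_if_adj_anticomplete[of v z h] v \<open>v \<notin> set vs\<close> z z_props v_compl h False by blast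
  qed (use v_compl in blast)
qed

lemma homogeneous_H:
  assumes "Z \<noteq> {}"
  shows "homogeneous V E H"
proof -
  have finite: "finite V"
    using simple unfolding simple_graph_def by blast
  have "H \<subseteq> V"
    unfolding H_def by blast
  moreover have "2 \<le> card H"
    using card_mono[OF finite_subset[OF \<open>H \<subseteq> V\<close> finite] set_subset_H] length_ge_7
      distinct_card[OF distinct_vs] by simp
  moreover have "H \<subset> V"
    using \<open>H \<subseteq> V\<close> assms unfolding H_def Z_def by blast
  then have "card H < card V"
    using psubset_card_mono finite by blast
  moreover have "V - H \<subseteq> Z \<union> K"
    unfolding H_def by blast
  ultimately show ?thesis
    unfolding homogeneous_def using Z_anticomplete_H K_complete_H by blast
qed

lemma co_triangle_in_H: "co_triangle H E T \<Longrightarrow> card (T \<inter> set vs) < 2"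
  using co_triangle_meets_Z[of T] unfolding co_triangle_def H_def by fastforce

end

theorem lemma3:
  fixes V :: "'a set" and E :: "'a \<Rightarrow> 'a \<Rightarrow> bool" and A :: "'a set"
  assumes "simple_graph V E"
    and "\<not> has_induced_banner V E"
    and "\<not> has_induced_C5 V E"
    and "odd_antihole V E A"
    and "\<exists>T. co_triangle V E T \<and> card (T \<inter> A) \<ge> 2"
  shows "\<exists>H. homogeneous V E H \<and> A \<subseteq> H \<and>
           (\<forall>T. co_triangle H E T \<longrightarrow> card (T \<inter> A) < 2)"
proof -
  from assms(4) obtain vs where vs: "set vs = A" "A \<subseteq> V" "4 \<le> length vs"
      "induced_cycle (compl_adj E) vs" and "odd (card A)"
    unfolding odd_antihole_def odd_hole_def hole_def by blast
  interpret antihole_cycle V E vs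
    using assms(1) vs by unfold_locales auto
  have "odd (length vs)"
    using \<open>odd (card A)\<close> vs(1) distinct_card distinct_vs by metis
  moreover have "length vs \<noteq> 5"
    using has_induced_C5_if_length_5 assms(3) by blast
  ultimately have "7 \<le> length vs"
    using vs(3) by presburger
  then interpret banner_free_antihole V E vs
    using \<open>odd (length vs)\<close> assms(2,3) by unfold_locales
  have "Z \<noteq> {}"
    using assms(5) co_triangle_meets_Z vs(1) by blast
  then show ?thesis
    using homogeneous_H set_subset_H co_triangle_in_H vs(1) by blast
qed

end
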